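(* Let $\eta>0$, $\lambda>0$ with $\eta\lambda\le \tfrac12$, let $x(0)\in\mathbb{R}^d\setminus\{0\}$, and let $(x(t))_{t\ge0}$ be the GD+WD iterates $x(t+1)=(1-\eta\lambda)x(t)-\eta\nabla L(x(t))$. Set $$T_0=\left\lceil \frac{1}{2\eta\lambda}\left(\left|\ln \frac{\|x(0)\|_2^2}{\rho\pi^2\eta}\right|+3\right)\right\rceil .$$ Then $$\min_{t=0,\ldots,T_0}\|\nabla L(\bar x(t))\|_2^2\le 8\pi^4\rho^2\lambda\eta .$$
   Context: $L:\mathbb{R}^d\setminus\{0\}\to\mathbb{R}$ is $C^2$ and scale invariant, i.e. $L(cx)=L(x)$ for all $c>0$ and $x\neq0$. $\rho:=\max_{\|x\|_2=1}\|\nabla^2L(x)\|_2$ (spectral norm), assumed $\rho>0$. For $x\ne0$, $\bar x:=x/\|x\|_2$. (For scale invariant $L$ one has $\langle\nabla L(x),x\rangle=0$, so the iterates remain nonzero when $\eta\lambda<1$.) *)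

theory Defs
  imports "HOL-Analysis.Analysis"
begin

definition hess_sphere_bound :: "('a::euclidean_space \<Rightarrow> 'a \<Rightarrow>\<^sub>L 'a) \<Rightarrow> real" where
  "hess_sphere_bound H = Sup ((\<lambda>x. norm (H x)) ` {x. norm x = 1})"

end

theory Submission
  imports Defs
begin

text \<open>Write \<open>a(t) = \<parallel>x(t)\<parallel>\<^sup>2 / (\<rho> \<eta>)\<close>. Scale invariance makes \<open>\<nabla>L(x)\<close> orthogonal to \<open>x\<close> and
  homogeneous of degree \<open>-1\<close>, so \<open>a(t+1) = (1 - \<eta>\<lambda>)\<^sup>2 a(t) + s(t) / a(t)\<close> with
  \<open>s(t) = \<parallel>\<nabla>L(x(t) / \<parallel>x(t)\<parallel>)\<parallel>\<^sup>2 / \<rho>\<^sup>2 \<le> \<pi>\<^sup>2\<close>. If \<open>s\<close> stayed above \<open>8\<pi>\<^sup>4\<eta>\<lambda>\<close> up to \<open>T\<^sub>0\<close>, then \<open>a\<close> would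
  climb above 4 within \<open>O(1/\<eta>\<lambda>)\<close> steps, stay above 4, and drop below \<open>\<pi>\<^sup>2 + 16\<pi>/3\<close> once weight
  decay has contracted away the initial scale. Above 4 every step decreases \<open>L\<close> by at least
  \<open>3/4 \<eta> \<parallel>\<nabla>L(x)\<parallel>\<^sup>2\<close>; with \<open>a\<close> bounded this accumulates to more than the oscillation \<open>4\<pi>\<rho>\<close> of \<open>L\<close>
  on the sphere, a contradiction.\<close>

lemma nat_ceiling_bounds:
  fixes x :: real assumes "0 \<le> x"
  shows "x \<le> real (nat \<lceil>x\<rceil>)" "real (nat \<lceil>x\<rceil>) < x + 1"
  using assms by linarith+

lemma one_minus_power_le_exp:
  fixes e :: real assumes "0 \<le> e" "e \<le> 1"
  shows "(1 - e)^n \<le> exp (- (e * real n))"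
proof -
  have "(1 - e)^n \<le> exp (- e)^n"
    using assms exp_ge_add_one_self[of "- e"] by (intro power_mono) auto
  then show ?thesis by (simp add: exp_of_nat_mult[symmetric] mult.commute)
qed

lemma four_pi_lt_descent_bound:
  fixes M e :: real
  assumes "144/100 \<le> M * e" "0 < e"
  shows "4 * pi < M * (3/4 * (8 * pi^4 * e / (pi^2 + 16 * pi / 3)))"
proof -
  have pi2: "9 < pi^2" using pi_gt3 power_strict_mono[of 3 pi 2] by simp
  have U: "0 < pi^2 + 16 * pi / 3" using pi_gt_zero by (simp add: add_pos_pos)
  have "4 * pi * (pi^2 + 16 * pi / 3) = 4 * (pi * pi^2) + 64 * pi^2 / 3"
    by (simp add: algebra_simps power2_eq_square)
  moreover have "pi * pi^2 \<le> (315/100) * pi^2" using pi_approx(2) pi2 by (intro mult_right_mono) auto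
  moreover have "9 * pi^2 \<le> pi^2 * pi^2" using pi2 by (intro mult_right_mono) auto
  moreover have "pi^4 = pi^2 * pi^2" by (simp add: power4_eq_xxxx power2_eq_square)
  ultimately have "4 * pi * (pi^2 + 16 * pi / 3) < (144/100) * (6 * pi^4)" using pi2 by linarith
  also have "\<dots> \<le> (M * e) * (6 * pi^4)" using assms(1) by (intro mult_right_mono) auto
  finally show ?thesis using U by (simp add: field_simps)
qed

section \<open>Scalar dynamics of the normalized iterates\<close>

text \<open>The scalar dynamics of the iterates: \<open>a\<close>, \<open>s\<close>, \<open>f\<close>, \<open>e\<close> stand for \<open>\<parallel>x\<parallel>\<^sup>2 / (\<rho>\<eta>)\<close>,
  \<open>\<parallel>\<nabla>L(x / \<parallel>x\<parallel>)\<parallel>\<^sup>2 / \<rho>\<^sup>2\<close>, \<open>L(x) / \<rho>\<close> and \<open>\<eta>\<lambda>\<close>.\<close>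

locale wd_norm_recursion =
  fixes a s f :: "nat \<Rightarrow> real" and e :: real
  assumes e_pos: "0 < e" and e_le_half: "e \<le> 1/2"
    and a_pos: "0 < a t"
    and a_Suc: "a (Suc t) = (1 - e)^2 * a t + s t / a t"
    and s_nonneg: "0 \<le> s t" and s_le: "s t \<le> pi^2"
    and f_descent: "4 \<le> a t \<Longrightarrow> f (Suc t) \<le> f t - 3/4 * (s t / a t)"
    and f_oscillation: "f i - f j \<le> 4 * pi"
begin

lemma contraction_factor: "1 - 2*e \<le> (1 - e)^2" "(1 - e)^2 \<le> 1" "0 < (1 - e)^2"
proof -
  have "0 < 1 - e" "1 - e \<le> 1" using e_pos e_le_half by auto
  then show "(1 - e)^2 \<le> 1" "0 < (1 - e)^2" by (auto simp: power_le_one)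
  show "1 - 2*e \<le> (1 - e)^2" by (simp add: power2_eq_square algebra_simps)
qed

lemma e_small_if_gap: "8 * pi^4 * e < s t \<Longrightarrow> e < 1/72"
proof -
  assume gap: "8 * pi^4 * e < s t"
  have pi2: "9 < pi^2" using pi_gt3 power_strict_mono[of 3 pi 2] by simp
  have "pi^2 * (8 * pi^2 * e) = 8 * pi^4 * e" by (simp add: power4_eq_xxxx power2_eq_square)
  then have "pi^2 * (8 * pi^2 * e) < pi^2 * 1" using gap s_le[of t] by linarith
  then have "8 * pi^2 * e < 1" using mult_less_cancel_left_pos[of "pi^2"] by simp
  moreover have "72 * e \<le> 8 * pi^2 * e" using pi2 e_pos by simp
  ultimately show "e < 1/72" by linarith
qed

lemma f_decreasing: "4 \<le> a t \<Longrightarrow> f (Suc t) \<le> f t"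
proof -
  have "0 \<le> s t / a t" using s_nonneg[of t] a_pos[of t] by simp
  then show "4 \<le> a t \<Longrightarrow> f (Suc t) \<le> f t" using f_descent[of t] by linarith
qed

lemma a_Suc_ge_4:
  assumes a4: "4 \<le> a t" and gap: "8 * pi^4 * e < s t"
  shows "4 \<le> a (Suc t)"
proof -
  define q where "q = (1 - e)^2"
  define S where "S = 8 * pi^4 * e"
  have q: "1 - 2*e \<le> q" "q \<le> 1" "0 < q" using contraction_factor unfolding q_def by auto
  have S: "0 < S" using e_pos by (simp add: S_def)
  have step: "q * a t + S / a t \<le> a (Suc t)"
    using a_Suc[of t] gap a_pos[of t] unfolding q_def S_def by (simp add: divide_right_mono)
  show ?thesis
  proof (cases "4 \<le> q * a t")
    case True
    then show ?thesis using step S a_pos[of t] by (smt (verit) divide_pos_pos)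
  next
    case False
    have "S * q / 4 \<le> S / a t"
      using False q a_pos[of t] S by (simp add: field_simps mult_left_mono)
    moreover have "4 * q \<le> q * a t" using a4 q by simp
    moreover have "4 \<le> 4 * q + S * q / 4"
    proof -
      have "e < 1/72" using e_small_if_gap gap .
      then have "16 * pi^4 * e \<le> 16 * pi^4 * (1/72)" by simp
      moreover have "81 < pi^4" using pi_gt3 power_strict_mono[of 3 pi 4] by simp
      ultimately have "0 \<le> 8 * pi^4 - 32 - 16 * pi^4 * e" by linarith
      then have "0 \<le> e * (8 * pi^4 - 32 - 16 * pi^4 * e)" using e_pos by simp
      then have "16 \<le> (1 - 2*e) * (16 + S)" unfolding S_def by (simp add: algebra_simps)
      then have "16 \<le> q * (16 + S)" using q S by (smt (verit) mult_right_mono)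
      then show ?thesis by (simp add: algebra_simps)
    qed
    ultimately show ?thesis using step by linarith
  qed
qed

lemma a_ge_4_persists:
  assumes "4 \<le> a t0" and "\<And>t. t0 \<le> t \<Longrightarrow> t < t0 + n \<Longrightarrow> 8 * pi^4 * e < s t"
  shows "4 \<le> a (t0 + n)"
  using assms(2)
proof (induction n)
  case 0 then show ?case using assms(1) by simp
next
  case (Suc n) then show ?case using a_Suc_ge_4[of "t0 + n"] by simp
qed

lemma a_Suc_ge_increment:
  assumes "a t < 4" and gap: "8 * pi^4 * e < s t"
  shows "a t + (2 * pi^4 - 8) * e \<le> a (Suc t)"
proof -
  have "8 * pi^4 * e / 4 \<le> s t / 4" using gap by linarith
  also have "\<dots> \<le> s t / a t" using assms(1) a_pos[of t] s_nonneg[of t] by (intro divide_left_mono) auto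
  finally have "8 * pi^4 * e / 4 \<le> s t / a t" .
  moreover have "(1 - 2*e) * a t \<le> (1 - e)^2 * a t"
    using contraction_factor(1) a_pos[of t] by (simp add: mult_right_mono)
  moreover have "2 * e * a t \<le> 2 * e * 4" using assms(1) e_pos by simp
  ultimately show ?thesis using a_Suc[of t] by (simp add: algebra_simps)
qed

lemma a_grows_below_4:
  assumes "\<And>j. j < n \<Longrightarrow> a j < 4 \<and> 8 * pi^4 * e < s j"
  shows "a 0 + real n * ((2 * pi^4 - 8) * e) \<le> a n"
  using assms
proof (induction n)
  case 0 then show ?case by simp
next
  case (Suc n)
  then show ?case using a_Suc_ge_increment[of n] by (simp add: algebra_simps)
qed

lemma exists_first_a_ge_4:
  assumes gap: "\<And>t. real t < 3 / (100 * e) + 1 \<Longrightarrow> 8 * pi^4 * e < s t"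
  obtains tp where "4 \<le> a tp" "real tp < 3 / (100 * e) + 1" "\<And>j. j < tp \<Longrightarrow> a j < 4"
proof -
  define \<delta> where "\<delta> = (2 * pi^4 - 8) * e"
  have pi4: "81 < pi^4" using pi_gt3 power_strict_mono[of 3 pi 4] by simp
  then have \<delta>: "0 < \<delta>" using e_pos by (simp add: \<delta>_def)
  define K where "K = nat \<lceil>4 / \<delta>\<rceil>"
  have K: "4 / \<delta> \<le> real K" "real K < 4 / \<delta> + 1"
    unfolding K_def using nat_ceiling_bounds[of "4 / \<delta>"] \<delta> by auto
  have "4 / \<delta> \<le> 3 / (100 * e)" unfolding \<delta>_def using e_pos pi4 by (simp add: field_simps)
  then have K_gap: "real K < 3 / (100 * e) + 1" using K by linarith
  have "\<exists>t \<le> K. 4 \<le> a t"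
  proof (rule ccontr)
    assume "\<not> ?thesis"
    then have below: "\<And>j. j \<le> K \<Longrightarrow> a j < 4" by (meson not_le)
    have "\<And>j. j < K \<Longrightarrow> real j < 3 / (100 * e) + 1" using K_gap by (smt (verit) of_nat_less_iff)
    then have "a 0 + real K * \<delta> \<le> a K"
      unfolding \<delta>_def using below by (intro a_grows_below_4) (auto intro!: gap)
    moreover have "4 \<le> real K * \<delta>" using K(1) \<delta> by (simp add: field_simps)
    ultimately show False using below[of K] a_pos[of 0] by simp
  qed
  then obtain t where t: "t \<le> K" "4 \<le> a t" by blast
  then obtain tp where tp: "4 \<le> a tp" "\<forall>j<tp. \<not> 4 \<le> a j"
    using exists_least_iff[of "\<lambda>t. 4 \<le> a t"] by blast
  have "tp \<le> t" using tp(2) t(2) by (meson not_le)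
  then have "real tp < 3 / (100 * e) + 1" using t(1) K_gap by linarith
  with tp show thesis by (intro that) (auto simp: not_le)
qed

lemma first_a_ge_4_bound:
  assumes below: "\<And>j. j < tp \<Longrightarrow> a j < 4" and gap: "\<And>j. j < tp \<Longrightarrow> 8 * pi^4 * e < s j"
  shows "a tp * exp (- \<bar>ln (a 0 / pi^2)\<bar>) \<le> pi^2"
proof (cases tp)
  case 0
  have "exp (- \<bar>ln (a 0 / pi^2)\<bar>) \<le> exp (- ln (a 0 / pi^2))" by simp
  also have "\<dots> = pi^2 / a 0" using a_pos[of 0] by (simp add: exp_minus)
  finally show ?thesis using 0 a_pos[of 0] by (simp add: field_simps)
next
  case (Suc k)
  have pi2: "9 < pi^2" using pi_gt3 power_strict_mono[of 3 pi 2] by simp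
  have ak: "a k < 4" using below Suc by simp
  have "a 0 + real k * ((2 * pi^4 - 8) * e) \<le> a k"
    using below gap Suc by (intro a_grows_below_4) auto
  moreover have "0 \<le> real k * ((2 * pi^4 - 8) * e)"
    using e_pos pi_gt3 power_strict_mono[of 3 pi 4] by simp
  ultimately have a0k: "a 0 \<le> a k" by linarith
  then have "a 0 / pi^2 < 1" using ak pi2 by simp
  then have "exp (- \<bar>ln (a 0 / pi^2)\<bar>) = a 0 / pi^2" using a_pos[of 0] by simp
  moreover have "a tp \<le> 4 + pi^2 / a 0"
  proof -
    have "(1 - e)^2 * a k \<le> a k" using contraction_factor a_pos[of k] by simp
    moreover have "s k / a k \<le> pi^2 / a 0"
      using s_le[of k] a0k a_pos[of 0] s_nonneg[of k] by (intro frac_le) auto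
    ultimately show ?thesis using a_Suc[of k] Suc ak by simp
  qed
  ultimately have "a tp * exp (- \<bar>ln (a 0 / pi^2)\<bar>) \<le> (4 + pi^2 / a 0) * (a 0 / pi^2)"
    using a_pos[of 0] by (metis mult_right_mono divide_nonneg_pos less_imp_le pi_gt_zero zero_less_power)
  also have "\<dots> = (4 * a 0 + pi^2) / pi^2" using a_pos[of 0] pi2 by (simp add: field_simps)
  also have "\<dots> \<le> pi^2"
  proof -
    have "4 * a 0 + pi^2 \<le> pi^2 * pi^2" using a0k ak pi2 mult_right_mono[of 9 "pi^2" "pi^2"] by simp
    then show ?thesis using pi2 by (simp add: divide_le_eq)
  qed
  finally show ?thesis .
qed

lemma f_nonincreasing_above_4:
  assumes "4 \<le> a t0" and gap: "\<And>t. t0 \<le> t \<Longrightarrow> t < t0 + n \<Longrightarrow> 8 * pi^4 * e < s t"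
  shows "f (t0 + n) \<le> f t0"
  using gap
proof (induction n)
  case (Suc n)
  have "4 \<le> a (t0 + n)" using assms(1) Suc.prems by (intro a_ge_4_persists) auto
  then show ?case using f_decreasing[of "t0 + n"] Suc by fastforce
qed simp

lemma a_contracts_above_4:
  assumes "4 \<le> a t0" and gap: "\<And>t. t0 \<le> t \<Longrightarrow> t < t0 + n \<Longrightarrow> 8 * pi^4 * e < s t"
  shows "a (t0 + n) \<le> (1 - e)^(2*n) * a t0 + 4/3 * (f t0 - f (t0 + n))"
  using gap
proof (induction n)
  case 0 then show ?case by simp
next
  case (Suc n)
  define t where "t = t0 + n"
  have a4: "4 \<le> a t" unfolding t_def using assms(1) Suc.prems by (intro a_ge_4_persists) auto
  have f_mono: "f t \<le> f t0" unfolding t_def using assms(1) Suc.prems by (intro f_nonincreasing_above_4) auto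
  have IH: "a t \<le> (1 - e)^(2*n) * a t0 + 4/3 * (f t0 - f t)"
    using Suc unfolding t_def by simp
  have "(1 - e)^2 * a t \<le> (1 - e)^(2 * Suc n) * a t0 + 4/3 * (f t0 - f t)"
  proof -
    have "(1 - e)^2 * a t \<le> (1 - e)^2 * ((1 - e)^(2*n) * a t0 + 4/3 * (f t0 - f t))"
      using mult_left_mono[OF IH, of "(1 - e)^2"] contraction_factor(3) by simp
    also have "\<dots> \<le> (1 - e)^(2 * Suc n) * a t0 + 4/3 * (f t0 - f t)"
    proof -
      have "(1 - e)^2 * ((1 - e)^(2*n) * a t0) = (1 - e)^(2 * Suc n) * a t0"
        by (simp add: power_mult power2_eq_square)
      moreover have "(1 - e)^2 * (4/3 * (f t0 - f t)) \<le> 4/3 * (f t0 - f t)"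
        using contraction_factor f_mono by (intro mult_left_le_one_le) auto
      ultimately show ?thesis unfolding distrib_left by linarith
    qed
    finally show ?thesis .
  qed
  moreover have "f (Suc t) \<le> f t - 3/4 * (s t / a t)" using f_descent[OF a4] .
  ultimately show ?case using a_Suc[of t] unfolding t_def add_Suc_right right_diff_distrib by linarith
qed

lemma f_linear_descent:
  assumes "0 < S" "0 < U"
    and bounds: "\<And>t. t1 \<le> t \<Longrightarrow> t < t1 + m \<Longrightarrow> 4 \<le> a t \<and> a t \<le> U \<and> S < s t"
  shows "real m * (3/4 * (S / U)) \<le> f t1 - f (t1 + m)"
  using bounds
proof (induction m)
  case 0 then show ?case by simp
next
  case (Suc m)
  define t where "t = t1 + m"
  have b: "4 \<le> a t" "a t \<le> U" "S < s t" using Suc.prems[of t] unfolding t_def by auto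
  have "S / U \<le> S / a t" using b a_pos[of t] assms(1) by (intro divide_left_mono) auto
  also have "\<dots> \<le> s t / a t" using b a_pos[of t] by (intro divide_right_mono) auto
  finally have "S / U \<le> s t / a t" .
  moreover have "f (Suc t) \<le> f t - 3/4 * (s t / a t)" using f_descent b(1) .
  moreover have "real m * (3/4 * (S / U)) \<le> f t1 - f t" using Suc unfolding t_def by simp
  moreover have "real (Suc m) * (3/4 * (S / U)) = real m * (3/4 * (S / U)) + 3/4 * (S / U)"
    by (simp only: of_nat_Suc distrib_right mult_1_left add.commute)
  ultimately show ?case unfolding t_def by simp
qed

lemma a_bounded_after_relaxation:
  assumes a4: "4 \<le> a tp" and start: "a tp * exp (- l) \<le> pi^2" and n: "l / (2*e) \<le> real n"
    and gap: "\<And>t. tp \<le> t \<Longrightarrow> t < tp + n \<Longrightarrow> 8 * pi^4 * e < s t"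
  shows "a (tp + n) \<le> pi^2 + 16 * pi / 3"
proof -
  have "(1 - e)^(2*n) \<le> exp (- (e * real (2*n)))"
    using e_pos e_le_half by (intro one_minus_power_le_exp) auto
  also have "\<dots> \<le> exp (- l)" using n e_pos by (simp add: field_simps)
  finally have "(1 - e)^(2*n) * a tp \<le> exp (- l) * a tp" using a4 by (intro mult_right_mono) auto
  with start have "(1 - e)^(2*n) * a tp \<le> pi^2" by (simp add: mult.commute)
  moreover have "4/3 * (f tp - f (tp + n)) \<le> 16 * pi / 3" using f_oscillation[of tp "tp + n"] by simp
  moreover have "a (tp + n) \<le> (1 - e)^(2*n) * a tp + 4/3 * (f tp - f (tp + n))"
    using a4 gap by (rule a_contracts_above_4)
  ultimately show ?thesis by linarith
qed

lemma exists_bounded_window: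
  assumes T: "(\<bar>ln (a 0 / pi^2)\<bar> + 3) / (2*e) \<le> real T"
    and gap: "\<And>t. t \<le> T \<Longrightarrow> 8 * pi^4 * e < s t"
  obtains t1 where "real t1 + (147 / (100*e) - 2) < real T"
    and "\<And>t. t1 \<le> t \<Longrightarrow> t \<le> T \<Longrightarrow> 4 \<le> a t \<and> a t \<le> pi^2 + 16 * pi / 3"
proof -
  define l where "l = \<bar>ln (a 0 / pi^2)\<bar>"
  have e72: "e < 1/72" using e_small_if_gap gap[of 0] by simp
  have T_split: "l / (2*e) + 3 / (2*e) \<le> real T" using T by (simp add: l_def add_divide_distrib)
  have l: "0 \<le> l / (2*e)" using e_pos by (simp add: l_def)
  have "3 / (100*e) + 1 \<le> 3 / (2*e)" using e_pos e72 by (simp add: field_simps)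
  then have early: "t \<le> T" if "real t < 3 / (100*e) + 1" for t
    using that T_split l by linarith
  obtain tp where tp: "4 \<le> a tp" "real tp < 3 / (100*e) + 1" "\<And>j. j < tp \<Longrightarrow> a j < 4"
    using exists_first_a_ge_4 early gap by blast
  have start: "a tp * exp (- l) \<le> pi^2"
    unfolding l_def using tp(3) gap early[OF tp(2)] by (intro first_a_ge_4_bound) auto
  define n1 where "n1 = nat \<lceil>l / (2*e)\<rceil>"
  have n1: "l / (2*e) \<le> real n1" "real n1 < l / (2*e) + 1"
    unfolding n1_def using nat_ceiling_bounds l by auto
  show thesis
  proof (rule that[of "tp + n1"])
    show "real (tp + n1) + (147 / (100*e) - 2) < real T"
      using tp(2) n1(2) T_split by (simp add: field_simps)
    fix t assume t: "tp + n1 \<le> t" "t \<le> T"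
    define n where "n = t - tp"
    have t_eq: "t = tp + n" using t(1) unfolding n_def by simp
    have gap_n: "\<And>t'. tp \<le> t' \<Longrightarrow> t' < tp + n \<Longrightarrow> 8 * pi^4 * e < s t'"
      using t t_eq gap by auto
    have "real n1 \<le> real n" using t(1) unfolding n_def by simp
    then have "l / (2*e) \<le> real n" using n1(1) by linarith
    then show "4 \<le> a t \<and> a t \<le> pi^2 + 16 * pi / 3"
      using a_ge_4_persists[OF tp(1) gap_n] a_bounded_after_relaxation[OF tp(1) start _ gap_n]
      unfolding t_eq by simp
  qed
qed

theorem exists_s_le:
  assumes T: "(\<bar>ln (a 0 / pi^2)\<bar> + 3) / (2*e) \<le> real T"
  shows "\<exists>t \<le> T. s t \<le> 8 * pi^4 * e"
proof (rule ccontr)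
  assume "\<not> ?thesis"
  then have gap: "\<And>t. t \<le> T \<Longrightarrow> 8 * pi^4 * e < s t" by (meson not_le)
  have e72: "e < 1/72" using e_small_if_gap gap[of 0] by simp
  obtain t1 where t1_T: "real t1 + (147 / (100*e) - 2) < real T"
    and bounded: "\<And>t. t1 \<le> t \<Longrightarrow> t \<le> T \<Longrightarrow> 4 \<le> a t \<and> a t \<le> pi^2 + 16 * pi / 3"
    using exists_bounded_window[OF T gap] by blast
  define M where "M = T - t1"
  have "2 \<le> 147 / (100*e)" using e_pos e72 by (simp add: field_simps)
  then have "t1 \<le> T" using t1_T by linarith
  then have M_eq: "real M = real T - real t1" unfolding M_def by simp
  have "147/100 - 2*e = (147 / (100*e) - 2) * e" using e_pos by (simp add: field_simps)
  also have "\<dots> \<le> real M * e" using t1_T M_eq e_pos by (intro mult_right_mono) auto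
  finally have "147/100 - 2*e \<le> real M * e" .
  then have "4 * pi < real M * (3/4 * (8 * pi^4 * e / (pi^2 + 16 * pi / 3)))"
    using e72 e_pos by (intro four_pi_lt_descent_bound) auto
  also have "\<dots> \<le> f t1 - f (t1 + M)"
    using e_pos gap bounded \<open>t1 \<le> T\<close> unfolding M_def
    by (intro f_linear_descent) (auto simp: add_pos_pos)
  also have "\<dots> \<le> 4 * pi" by (rule f_oscillation)
  finally show False by simp
qed
end

section \<open>Scale-invariant losses\<close>

lemma taylor_lower_bound:
  fixes \<phi> \<phi>' \<phi>'' :: "real \<Rightarrow> real"
  assumes "0 \<le> T"
    and deriv1: "\<And>s. 0 \<le> s \<Longrightarrow> s \<le> T \<Longrightarrow> (\<phi> has_real_derivative \<phi>' s) (at s)"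
    and deriv2: "\<And>s. 0 \<le> s \<Longrightarrow> s \<le> T \<Longrightarrow> (\<phi>' has_real_derivative \<phi>'' s) (at s)"
    and deriv2_ge: "\<And>s. 0 \<le> s \<Longrightarrow> s \<le> T \<Longrightarrow> - K \<le> \<phi>'' s"
  shows "\<phi> 0 + T * \<phi>' 0 - K * T^2 / 2 \<le> \<phi> T"
proof -
  have deriv1_ge: "\<phi>' 0 - K * s \<le> \<phi>' s" if "0 \<le> s" "s \<le> T" for s
  proof -
    have "(\<lambda>r. \<phi>' r + K * r) 0 \<le> (\<lambda>r. \<phi>' r + K * r) s"
    proof (rule DERIV_nonneg_imp_nondecreasing[OF that(1)])
      fix r assume "0 \<le> r" "r \<le> s"
      then show "\<exists>y. ((\<lambda>r. \<phi>' r + K * r) has_real_derivative y) (at r) \<and> 0 \<le> y"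
        using deriv2[of r] deriv2_ge[of r] that by (intro exI[of _ "\<phi>'' r + K"]) (auto intro!: derivative_eq_intros)
    qed
    then show ?thesis by simp
  qed
  have "(\<lambda>r. \<phi> r - r * \<phi>' 0 + K * r^2 / 2) 0 \<le> (\<lambda>r. \<phi> r - r * \<phi>' 0 + K * r^2 / 2) T"
  proof (rule DERIV_nonneg_imp_nondecreasing[OF assms(1)])
    fix r assume "0 \<le> r" "r \<le> T"
    then show "\<exists>y. ((\<lambda>r. \<phi> r - r * \<phi>' 0 + K * r^2 / 2) has_real_derivative y) (at r) \<and> 0 \<le> y"
      using deriv1[of r] deriv1_ge[of r] by (intro exI[of _ "\<phi>' r - \<phi>' 0 + K * r"]) (auto intro!: derivative_eq_intros)
  qed
  then show ?thesis by simp
qed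

lemma unit_orthogonal_or_parallel:
  fixes u :: "'a::real_inner"
  assumes "norm u = 1"
  shows "(\<exists>w. norm w = 1 \<and> u \<bullet> w = 0) \<or> (\<forall>y. y = (y \<bullet> u) *\<^sub>R u)"
proof (rule disjCI)
  assume "\<not> (\<forall>y. y = (y \<bullet> u) *\<^sub>R u)"
  then obtain y where y: "y - (y \<bullet> u) *\<^sub>R u \<noteq> 0" by auto
  define w where "w = (1 / norm (y - (y \<bullet> u) *\<^sub>R u)) *\<^sub>R (y - (y \<bullet> u) *\<^sub>R u)"
  have "u \<bullet> u = 1" using assms by (simp add: dot_square_norm)
  then have "norm w = 1 \<and> u \<bullet> w = 0"
    using y unfolding w_def by (simp add: inner_diff_right inner_commute)
  then show "\<exists>w. norm w = 1 \<and> u \<bullet> w = 0" by blast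
qed

lemma hess_sphere_bound_eq_0_if_gradient_vanishes:
  fixes G :: "'a::euclidean_space \<Rightarrow> 'a"
  assumes "\<And>y. y \<noteq> 0 \<Longrightarrow> (G has_derivative blinfun_apply (H y)) (at y)"
    and "\<And>y. y \<noteq> 0 \<Longrightarrow> G y = 0"
  shows "hess_sphere_bound H = 0"
proof -
  have H0: "H y = 0" if "y \<noteq> 0" for y
  proof -
    have "((\<lambda>z. 0) has_derivative (\<lambda>h. 0)) (at y)" by simp
    then have "(G has_derivative (\<lambda>h. 0)) (at y)"
      by (rule has_derivative_transform_within_open[of _ _ _ _ "- {0}"]) (use assms(2) that in auto)
    then have "blinfun_apply (H y) = (\<lambda>h. 0)" by (rule has_derivative_unique[OF assms(1)[OF that]])
    then show "H y = 0" by (intro blinfun_eqI) simp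
  qed
  define b :: 'a where "b = (SOME i. i \<in> Basis)"
  have "b \<in> Basis" unfolding b_def by (rule SOME_Basis)
  then have b: "norm b = 1" "b \<noteq> 0" using norm_Basis nonzero_Basis by blast+
  have "(\<lambda>x. norm (H x)) ` {x. norm x = 1} = {0}"
  proof (intro equalityI subsetI)
    fix r assume "r \<in> (\<lambda>x. norm (H x)) ` {x. norm x = 1}"
    then obtain x where "norm x = 1" "r = norm (H x)" by blast
    moreover have "x \<noteq> 0" using \<open>norm x = 1\<close> by auto
    ultimately show "r \<in> {0}" using H0[of x] by simp
  next
    fix r :: real assume "r \<in> {0}"
    then show "r \<in> (\<lambda>x. norm (H x)) ` {x. norm x = 1}"
      using b H0[of b] by (intro image_eqI[of _ _ b]) auto
  qed
  then show ?thesis unfolding hess_sphere_bound_def by simp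
qed

lemma great_circle_has_vector_derivative:
  fixes u w :: "'a::real_normed_vector"
  shows "((\<lambda>t. cos t *\<^sub>R u + sin t *\<^sub>R w) has_vector_derivative (- sin t *\<^sub>R u + cos t *\<^sub>R w)) (at t)"
    and "((\<lambda>t. - sin t *\<^sub>R u + cos t *\<^sub>R w) has_vector_derivative - (cos t *\<^sub>R u + sin t *\<^sub>R w)) (at t)"
  by (auto intro!: derivative_eq_intros simp: algebra_simps)

lemma norm_great_circle:
  fixes u w :: "'a::real_inner"
  assumes "norm u = 1" "norm w = 1" "u \<bullet> w = 0"
  shows "norm (cos t *\<^sub>R u + sin t *\<^sub>R w) = 1" "norm (- sin t *\<^sub>R u + cos t *\<^sub>R w) = 1"
proof -
  have "u \<bullet> u = 1" "w \<bullet> w = 1" "w \<bullet> u = 0" using assms by (auto simp: inner_commute dot_square_norm)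
  then have "(cos t *\<^sub>R u + sin t *\<^sub>R w) \<bullet> (cos t *\<^sub>R u + sin t *\<^sub>R w) = 1"
    "(- sin t *\<^sub>R u + cos t *\<^sub>R w) \<bullet> (- sin t *\<^sub>R u + cos t *\<^sub>R w) = 1"
    using assms(3)
    by (simp_all add: inner_add_left inner_add_right inner_diff_left inner_diff_right power2_eq_square[symmetric])
  then show "norm (cos t *\<^sub>R u + sin t *\<^sub>R w) = 1" "norm (- sin t *\<^sub>R u + cos t *\<^sub>R w) = 1"
    by (simp_all add: norm_eq_sqrt_inner)
qed

lemma norm_le_norm_add_orthogonal:
  fixes y d :: "'a::real_inner"
  assumes "y \<bullet> d = 0" shows "norm y \<le> norm (y + d)"
proof -
  have "(norm (y + d))^2 = (norm y)^2 + (norm d)^2"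
    using assms by (simp add: norm_add_Pythagorean orthogonal_def)
  then have "(norm y)^2 \<le> (norm (y + d))^2" by simp
  then show ?thesis by (rule power2_le_imp_le) simp
qed

lemma norm_convex_comb_units_ge:
  fixes u v :: "'a::real_inner"
  assumes "norm u = 1" "norm v = 1" "0 \<le> u \<bullet> v" "0 \<le> s" "s \<le> 1"
  shows "1/2 \<le> (norm ((1 - s) *\<^sub>R u + s *\<^sub>R v))^2"
proof -
  have "u \<bullet> u = 1" "v \<bullet> v = 1" using assms(1,2) by (auto simp: dot_square_norm)
  then have "(norm ((1 - s) *\<^sub>R u + s *\<^sub>R v))^2 = (1 - s)^2 + s^2 + 2 * (s * (1 - s)) * (u \<bullet> v)"
    unfolding power2_norm_eq_inner
    by (simp add: inner_add_left inner_add_right inner_commute power2_eq_square algebra_simps)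
  moreover have "0 \<le> 2 * (s * (1 - s)) * (u \<bullet> v)" using assms(3-5) by simp
  moreover have "(1 - s)^2 + s^2 = 1/2 + 2 * (s - 1/2)^2" by (simp add: power2_eq_square algebra_simps)
  ultimately show ?thesis by (smt (verit) zero_le_power2)
qed

lemma wd_descent_arith:
  fixes e \<eta> \<rho> n g :: real
  assumes "0 < e" "e \<le> 1/2" "0 < \<eta>" "0 < \<rho>" "0 < n" "0 \<le> g" "4 * \<rho> * \<eta> \<le> n"
  shows "\<rho> * \<eta>^2 * g / (2 * (1 - e)^2 * n) - \<eta> * g / (1 - e) \<le> - 3/4 * (\<eta> * g)"
proof -
  define u where "u = 1 / (1 - e)"
  define r where "r = \<rho> * \<eta> / n"
  have u: "1 \<le> u" "u \<le> 2" unfolding u_def using assms(1,2) by (auto simp: field_simps)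
  have r: "0 \<le> r" "r \<le> 1/4" unfolding r_def using assms(3-5,7) by (auto simp: field_simps)
  have "u^2 \<le> 3 * u - 2" using mult_nonneg_nonneg[of "u - 1" "2 - u"] u by (simp add: power2_eq_square algebra_simps)
  moreover have "u^2 * r \<le> u^2 * (1/4)" using r by (intro mult_left_mono) auto
  ultimately have "3/4 \<le> u - u^2 * r / 2" using u by linarith
  then have "(\<eta> * g) * (3/4) \<le> (\<eta> * g) * (u - u^2 * r / 2)"
    using assms(3,6) by (intro mult_left_mono) auto
  then have "3/4 * (\<eta> * g) \<le> (\<eta> * g) * u - (\<eta> * g) * (u^2 * r / 2)"
    by (simp add: right_diff_distrib mult.commute)
  moreover have "\<eta> * g / (1 - e) = (\<eta> * g) * u" unfolding u_def by simp
  moreover have "\<rho> * \<eta>^2 * g / (2 * (1 - e)^2 * n) = (\<eta> * g) * (u^2 * r / 2)"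
    unfolding u_def r_def using assms(1,2,5) by (simp add: field_simps power2_eq_square)
  ultimately show ?thesis by linarith
qed

locale scale_invariant_loss =
  fixes L :: "'a::euclidean_space \<Rightarrow> real"
    and G :: "'a \<Rightarrow> 'a"
    and H :: "'a \<Rightarrow> 'a \<Rightarrow>\<^sub>L 'a"
  assumes L_grad: "\<And>y. y \<noteq> 0 \<Longrightarrow> (L has_derivative (\<lambda>h. G y \<bullet> h)) (at y)"
    and G_hess: "\<And>y. y \<noteq> 0 \<Longrightarrow> (G has_derivative blinfun_apply (H y)) (at y)"
    and H_cont: "continuous_on (- {0}) H"
    and scale_inv: "\<And>c y. c > 0 \<Longrightarrow> y \<noteq> 0 \<Longrightarrow> L (c *\<^sub>R y) = L y"
    and rho_pos: "hess_sphere_bound H > 0"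
begin

lemma has_real_derivative_L_comp:
  assumes "(\<gamma> has_vector_derivative v) (at s)" "\<gamma> s \<noteq> 0"
  shows "((\<lambda>s. L (\<gamma> s)) has_real_derivative (G (\<gamma> s) \<bullet> v)) (at s)"
  using has_derivative_compose[OF assms(1)[unfolded has_vector_derivative_def] L_grad[OF assms(2)]]
  by (rule has_derivative_imp_has_field_derivative) (simp add: mult.commute)

lemma has_real_derivative_inner_G_comp:
  assumes "(\<gamma> has_vector_derivative v) (at s)" "(\<beta> has_vector_derivative w) (at s)" "\<gamma> s \<noteq> 0"
  shows "((\<lambda>s. G (\<gamma> s) \<bullet> \<beta> s) has_real_derivative (G (\<gamma> s) \<bullet> w + H (\<gamma> s) v \<bullet> \<beta> s)) (at s)"
proof -
  have "((\<lambda>s. G (\<gamma> s)) has_derivative (\<lambda>h. H (\<gamma> s) (h *\<^sub>R v))) (at s)"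
    using has_derivative_compose[OF assms(1)[unfolded has_vector_derivative_def] G_hess[OF assms(3)]] .
  from has_derivative_inner[OF this assms(2)[unfolded has_vector_derivative_def]] show ?thesis
    by (rule has_derivative_imp_has_field_derivative) (simp add: blinfun.scaleR_right algebra_simps)
qed

lemma inner_G_self:
  assumes "y \<noteq> 0" shows "G y \<bullet> y = 0"
proof -
  have "((\<lambda>r. L (r *\<^sub>R y)) has_real_derivative (G (1 *\<^sub>R y) \<bullet> y)) (at 1)"
    by (rule has_real_derivative_L_comp) (auto intro!: derivative_eq_intros simp: assms)
  moreover have "((\<lambda>r. L (r *\<^sub>R y)) has_real_derivative 0) (at 1)"
    by (rule has_field_derivative_transform_within_open[of "\<lambda>r. L y" _ _ "{0<..}"])
       (auto simp: scale_inv assms)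
  ultimately show ?thesis using DERIV_unique by fastforce
qed

lemma has_derivative_comp_scaleR:
  assumes "(F has_derivative F') (at (c *\<^sub>R y))"
  shows "((\<lambda>z. F (c *\<^sub>R z)) has_derivative (\<lambda>h. F' (c *\<^sub>R h))) (at y)"
  using has_derivative_compose[OF bounded_linear_imp_has_derivative[OF bounded_linear_scaleR_right] assms]
  by simp

lemma G_scaleR:
  assumes "0 < c" "y \<noteq> 0"
  shows "G (c *\<^sub>R y) = (1 / c) *\<^sub>R G y"
proof -
  have "((\<lambda>z. L (c *\<^sub>R z)) has_derivative (\<lambda>h. G (c *\<^sub>R y) \<bullet> (c *\<^sub>R h))) (at y)"
    using assms by (intro has_derivative_comp_scaleR L_grad) simp
  moreover have "((\<lambda>z. L (c *\<^sub>R z)) has_derivative (\<lambda>h. G y \<bullet> h)) (at y)"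
    by (rule has_derivative_transform_within_open[OF L_grad[OF assms(2)], of "- {0}"])
       (auto simp: scale_inv assms)
  ultimately have "(\<lambda>h. G (c *\<^sub>R y) \<bullet> (c *\<^sub>R h)) = (\<lambda>h. G y \<bullet> h)"
    by (rule has_derivative_unique)
  then have "(c *\<^sub>R G (c *\<^sub>R y) - G y) \<bullet> h = 0" for h
    by (simp add: inner_diff_left fun_eq_iff)
  then have "c *\<^sub>R G (c *\<^sub>R y) - G y = 0" using inner_eq_zero_iff by blast
  then have "G y = c *\<^sub>R G (c *\<^sub>R y)" by simp
  then show ?thesis using assms(1) by simp
qed

lemma H_scaleR:
  assumes "0 < c" "y \<noteq> 0"
  shows "H (c *\<^sub>R y) = (1 / c^2) *\<^sub>R H y"
proof -
  have "((\<lambda>z. G (c *\<^sub>R z)) has_derivative (\<lambda>h. H (c *\<^sub>R y) (c *\<^sub>R h))) (at y)"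
    using assms by (intro has_derivative_comp_scaleR G_hess) simp
  moreover have "((\<lambda>z. (1 / c) *\<^sub>R G z) has_derivative (\<lambda>h. (1 / c) *\<^sub>R H y h)) (at y)"
    using G_hess[OF assms(2)] by (auto intro!: derivative_eq_intros)
  then have "((\<lambda>z. G (c *\<^sub>R z)) has_derivative (\<lambda>h. (1 / c) *\<^sub>R H y h)) (at y)"
    by (rule has_derivative_transform_within_open[of _ _ _ _ "- {0}"]) (auto simp: G_scaleR assms)
  ultimately have "(\<lambda>h. H (c *\<^sub>R y) (c *\<^sub>R h)) = (\<lambda>h. (1 / c) *\<^sub>R H y h)"
    by (rule has_derivative_unique)
  then have scaled: "c *\<^sub>R H (c *\<^sub>R y) h = (1 / c) *\<^sub>R H y h" for h
    by (simp add: fun_eq_iff blinfun.scaleR_right)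
  have "H (c *\<^sub>R y) h = ((1 / c^2) *\<^sub>R H y) h" for h
  proof -
    have "H (c *\<^sub>R y) h = (1 / c) *\<^sub>R (c *\<^sub>R H (c *\<^sub>R y) h)" using assms(1) by simp
    also have "\<dots> = ((1 / c^2) *\<^sub>R H y) h" by (simp add: scaled power2_eq_square scaleR_blinfun.rep_eq)
    finally show ?thesis .
  qed
  then show ?thesis by (rule blinfun_eqI)
qed

lemma norm_H_le_on_sphere:
  assumes "norm u = 1" shows "norm (H u) \<le> hess_sphere_bound H"
proof -
  have "continuous_on (sphere 0 1) (\<lambda>x. norm (H x))"
    by (intro continuous_on_norm continuous_on_subset[OF H_cont]) auto
  then have "bdd_above ((\<lambda>x. norm (H x)) ` sphere 0 1)"
    by (intro bounded_imp_bdd_above compact_imp_bounded compact_continuous_image) auto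
  moreover have "{x. norm x = 1} = sphere (0::'a) 1" by auto
  ultimately show ?thesis
    unfolding hess_sphere_bound_def using assms by (intro cSup_upper) auto
qed

lemma norm_H_le:
  assumes "z \<noteq> 0" shows "norm (H z) \<le> hess_sphere_bound H / (norm z)^2"
proof -
  have "H z = H (norm z *\<^sub>R ((1 / norm z) *\<^sub>R z))" using assms by simp
  also have "\<dots> = (1 / (norm z)^2) *\<^sub>R H ((1 / norm z) *\<^sub>R z)" using assms by (intro H_scaleR) auto
  finally have "norm (H z) = norm (H ((1 / norm z) *\<^sub>R z)) / (norm z)^2" by simp
  also have "\<dots> \<le> hess_sphere_bound H / (norm z)^2"
    using assms by (intro divide_right_mono norm_H_le_on_sphere) auto
  finally show ?thesis .
qed

lemma abs_inner_H_le:
  assumes "z \<noteq> 0"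
  shows "\<bar>H z v \<bullet> v\<bar> \<le> hess_sphere_bound H / (norm z)^2 * (norm v)^2"
proof -
  have "\<bar>H z v \<bullet> v\<bar> \<le> norm (H z v) * norm v" by (rule Cauchy_Schwarz_ineq2)
  also have "\<dots> \<le> norm (H z) * norm v * norm v" by (intro mult_right_mono norm_blinfun) auto
  also have "\<dots> \<le> hess_sphere_bound H / (norm z)^2 * norm v * norm v"
    using norm_H_le[OF assms] by (intro mult_right_mono) auto
  finally show ?thesis by (simp add: power2_eq_square mult.assoc)
qed

lemma norm_G_eq_norm_G_normalized:
  assumes "z \<noteq> 0" shows "norm (G z) = norm (G ((1 / norm z) *\<^sub>R z)) / norm z"
proof -
  have "G z = G (norm z *\<^sub>R ((1 / norm z) *\<^sub>R z))" using assms by simp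
  also have "\<dots> = (1 / norm z) *\<^sub>R G ((1 / norm z) *\<^sub>R z)" using assms by (intro G_scaleR) auto
  finally show ?thesis by (simp add: divide_inverse_commute)
qed

lemma norm_G_le_on_sphere:
  assumes u: "norm u = 1" shows "norm (G u) \<le> pi * hess_sphere_bound H"
proof (cases "G u = 0")
  case True then show ?thesis using rho_pos by simp
next
  case False
  define w where "w = (1 / norm (G u)) *\<^sub>R G u"
  have u0: "u \<noteq> 0" using u by auto
  have w: "norm w = 1" "u \<bullet> w = 0"
    using False inner_G_self[OF u0] unfolding w_def by (auto simp: inner_commute)
  define \<gamma> where "\<gamma> t = cos t *\<^sub>R u + sin t *\<^sub>R w" for t
  define \<gamma>' where "\<gamma>' t = - sin t *\<^sub>R u + cos t *\<^sub>R w" for t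
  have norm_\<gamma>: "norm (\<gamma> t) = 1" "norm (\<gamma>' t) = 1" for t
    unfolding \<gamma>_def \<gamma>'_def using norm_great_circle[OF u w] by auto
  have \<gamma>0: "\<gamma> t \<noteq> 0" for t using norm_\<gamma>(1)[of t] by auto
  have d\<gamma>: "(\<gamma> has_vector_derivative \<gamma>' t) (at t)" "(\<gamma>' has_vector_derivative - \<gamma> t) (at t)" for t
    unfolding \<gamma>_def[abs_def] \<gamma>'_def[abs_def] by (rule great_circle_has_vector_derivative)+
  \<comment> \<open>Along the closed great circle through \<open>u\<close> in the direction of \<open>G u\<close>, \<open>L\<close> returns to its
    initial value after time \<open>2\<pi>\<close>, so the first-order gain is paid for by the curvature.\<close>
  have "L (\<gamma> 0) + (2*pi) * (G (\<gamma> 0) \<bullet> \<gamma>' 0) - hess_sphere_bound H * (2*pi)^2 / 2 \<le> L (\<gamma> (2*pi))"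
  proof (rule taylor_lower_bound[where \<phi>'' = "\<lambda>t. G (\<gamma> t) \<bullet> - \<gamma> t + H (\<gamma> t) (\<gamma>' t) \<bullet> \<gamma>' t"])
    fix t
    show "((\<lambda>t. L (\<gamma> t)) has_real_derivative G (\<gamma> t) \<bullet> \<gamma>' t) (at t)"
      by (rule has_real_derivative_L_comp[OF d\<gamma>(1) \<gamma>0])
    show "((\<lambda>t. G (\<gamma> t) \<bullet> \<gamma>' t) has_real_derivative G (\<gamma> t) \<bullet> - \<gamma> t + H (\<gamma> t) (\<gamma>' t) \<bullet> \<gamma>' t) (at t)"
      by (rule has_real_derivative_inner_G_comp[OF d\<gamma> \<gamma>0])
    have "\<bar>H (\<gamma> t) (\<gamma>' t) \<bullet> \<gamma>' t\<bar> \<le> hess_sphere_bound H"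
      using abs_inner_H_le[OF \<gamma>0, of t "\<gamma>' t"] norm_\<gamma> by simp
    then show "- hess_sphere_bound H \<le> G (\<gamma> t) \<bullet> - \<gamma> t + H (\<gamma> t) (\<gamma>' t) \<bullet> \<gamma>' t"
      using inner_G_self[OF \<gamma>0] by simp
  qed simp
  moreover have "\<gamma> (2*pi) = u" "\<gamma> 0 = u" "\<gamma>' 0 = w" unfolding \<gamma>_def \<gamma>'_def by auto
  moreover have "G u \<bullet> w = norm (G u)" unfolding w_def by (simp add: dot_square_norm power2_eq_square)
  ultimately have "2*pi * norm (G u) \<le> 2*pi * (pi * hess_sphere_bound H)"
    by (simp add: power2_eq_square algebra_simps)
  then show ?thesis by simp
qed

lemma norm_G_le:
  assumes "z \<noteq> 0" shows "norm (G z) \<le> pi * hess_sphere_bound H / norm z"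
  unfolding norm_G_eq_norm_G_normalized[OF assms] using assms
  by (intro divide_right_mono norm_G_le_on_sphere) auto

lemma L_diff_le_if_inner_nonneg:
  assumes u: "norm u = 1" and v: "norm v = 1" and uv: "0 \<le> u \<bullet> v"
  shows "L u - L v \<le> 2 * pi * hess_sphere_bound H"
proof -
  define \<rho> where "\<rho> = hess_sphere_bound H"
  define p where "p s = (1 - s) *\<^sub>R u + s *\<^sub>R v" for s
  have norm_p: "1/2 \<le> (norm (p s))^2" if "0 \<le> s" "s \<le> 1" for s
    unfolding p_def using norm_convex_comb_units_ge[OF u v uv that] .
  have p0: "p s \<noteq> 0" if "0 \<le> s" "s \<le> 1" for s
  proof
    assume "p s = 0"
    then show False using norm_p[OF that] by simp
  qed
  have "u \<bullet> u = 1" "v \<bullet> v = 1" using u v by (auto simp: dot_square_norm)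
  then have "(norm (v - u))^2 \<le> 2"
    using uv by (simp add: power2_norm_eq_inner inner_diff_left inner_diff_right inner_commute)
  then have sq: "(norm (v - u))^2 \<le> (2 * norm (p s))^2" if "0 \<le> s" "s \<le> 1" for s
    using norm_p[OF that] by (simp add: power_mult_distrib)
  have vu: "norm (v - u) \<le> 2 * norm (p s)" if "0 \<le> s" "s \<le> 1" for s
    using sq[OF that] by (rule power2_le_imp_le) simp
  have slope: "- (2 * pi * \<rho>) \<le> G (p s) \<bullet> (v - u)" if s: "0 \<le> s" "s \<le> 1" for s
  proof -
    have "\<bar>G (p s) \<bullet> (v - u)\<bar> \<le> norm (G (p s)) * norm (v - u)" by (rule Cauchy_Schwarz_ineq2)
    also have "\<dots> \<le> (pi * \<rho> / norm (p s)) * norm (v - u)"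
      using norm_G_le[OF p0[OF s]] unfolding \<rho>_def by (intro mult_right_mono) auto
    also have "\<dots> \<le> (pi * \<rho> / norm (p s)) * (2 * norm (p s))"
      using vu[OF s] rho_pos unfolding \<rho>_def by (intro mult_left_mono) auto
    also have "\<dots> = 2 * pi * \<rho>" using p0[OF s] by simp
    finally show ?thesis by linarith
  qed
  have "(\<lambda>s. L (p s) + 2 * pi * \<rho> * s) 0 \<le> (\<lambda>s. L (p s) + 2 * pi * \<rho> * s) 1"
  proof (rule DERIV_nonneg_imp_nondecreasing[of 0 1])
    fix s :: real assume s: "0 \<le> s" "s \<le> 1"
    have "(p has_vector_derivative (v - u)) (at s)"
      unfolding p_def[abs_def] by (auto intro!: derivative_eq_intros simp: algebra_simps)
    from has_real_derivative_L_comp[OF this p0[OF s]] slope[OF s]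
    show "\<exists>y. ((\<lambda>s. L (p s) + 2 * pi * \<rho> * s) has_real_derivative y) (at s) \<and> 0 \<le> y"
      by (intro exI[of _ "G (p s) \<bullet> (v - u) + 2 * pi * \<rho>"]) (auto intro!: derivative_eq_intros)
  qed simp
  then show ?thesis unfolding p_def \<rho>_def by simp
qed

lemma exists_orthogonal_unit:
  fixes u :: 'a
  assumes u: "norm u = 1" shows "\<exists>w. norm w = 1 \<and> u \<bullet> w = 0"
proof -
  have "hess_sphere_bound H = 0" if par: "\<forall>y. y = (y \<bullet> u) *\<^sub>R u"
  proof (rule hess_sphere_bound_eq_0_if_gradient_vanishes[OF G_hess])
    fix y :: 'a assume "y \<noteq> 0"
    have y: "(y \<bullet> u) *\<^sub>R u = y" using par by simp
    then have "y \<bullet> u \<noteq> 0" using \<open>y \<noteq> 0\<close> by auto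
    moreover have "(y \<bullet> u) * (G y \<bullet> u) = G y \<bullet> y"
      by (simp only: inner_scaleR_right[symmetric] y)
    ultimately have "G y \<bullet> u = 0" using inner_G_self[OF \<open>y \<noteq> 0\<close>] by simp
    then show "G y = 0" using par by (metis scale_zero_left)
  qed
  then show ?thesis using unit_orthogonal_or_parallel[OF u] rho_pos by auto
qed

lemma L_diff_le_on_sphere:
  assumes u: "norm u = 1" and v: "norm v = 1"
  shows "L u - L v \<le> 4 * pi * hess_sphere_bound H"
proof -
  obtain w where w: "norm w = 1" "0 \<le> u \<bullet> w" "0 \<le> w \<bullet> v"
  proof (cases "u + v = 0")
    case True
    obtain w where "norm w = 1" "u \<bullet> w = 0" using exists_orthogonal_unit[OF u] by blast
    moreover have "v = - u" using True by (simp add: eq_neg_iff_add_eq_0 add.commute)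
    ultimately show thesis using that by (simp add: inner_commute)
  next
    case False
    have "0 \<le> 1 + u \<bullet> v" using Cauchy_Schwarz_ineq2[of u v] u v by (simp add: abs_le_iff)
    moreover have "u \<bullet> u = 1" "v \<bullet> v = 1" using u v by (auto simp: dot_square_norm)
    ultimately show thesis using False
      by (intro that[of "(1 / norm (u + v)) *\<^sub>R (u + v)"])
         (auto simp: inner_add_left inner_add_right inner_commute)
  qed
  have "L u - L w \<le> 2 * pi * hess_sphere_bound H" by (rule L_diff_le_if_inner_nonneg[OF u w(1,2)])
  moreover have "L w - L v \<le> 2 * pi * hess_sphere_bound H" by (rule L_diff_le_if_inner_nonneg[OF w(1) v w(3)])
  ultimately show ?thesis by linarith
qed

lemma L_diff_le:
  assumes "u \<noteq> 0" "v \<noteq> 0"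
  shows "L u - L v \<le> 4 * pi * hess_sphere_bound H"
  using L_diff_le_on_sphere[of "(1 / norm u) *\<^sub>R u" "(1 / norm v) *\<^sub>R v"] assms
    scale_inv[of "1 / norm u" u] scale_inv[of "1 / norm v" v]
  by simp

lemma norm_wd_step:
  assumes "x \<noteq> 0"
  shows "(norm (a *\<^sub>R x - b *\<^sub>R G x))^2 = a^2 * (norm x)^2 + b^2 * (norm (G x))^2"
  using inner_G_self[OF assms] unfolding power2_norm_eq_inner
  by (simp add: inner_diff_left inner_diff_right inner_commute power2_eq_square)

lemma abs_inner_H_le_orthogonal:
  assumes "y \<noteq> 0" "y \<bullet> d = 0"
  shows "\<bar>H (y + s *\<^sub>R d) d \<bullet> d\<bar> \<le> hess_sphere_bound H / (norm y)^2 * (norm d)^2"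
proof -
  have le: "norm y \<le> norm (y + s *\<^sub>R d)" using assms(2) by (intro norm_le_norm_add_orthogonal) simp
  then have nz: "y + s *\<^sub>R d \<noteq> 0" using assms(1) by auto
  then have "\<bar>H (y + s *\<^sub>R d) d \<bullet> d\<bar> \<le> hess_sphere_bound H / (norm (y + s *\<^sub>R d))^2 * (norm d)^2"
    by (rule abs_inner_H_le)
  also have "\<dots> \<le> hess_sphere_bound H / (norm y)^2 * (norm d)^2"
    using le nz assms(1) rho_pos by (intro mult_right_mono divide_left_mono power_mono) auto
  finally show ?thesis .
qed

lemma L_wd_step_taylor:
  assumes x: "x \<noteq> 0" and e: "0 < e" "e < 1"
  shows "L ((1 - e) *\<^sub>R x - \<eta> *\<^sub>R G x) \<le> L x - \<eta> * (norm (G x))^2 / (1 - e)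
           + hess_sphere_bound H * \<eta>^2 * (norm (G x))^2 / (2 * (1 - e)^2 * (norm x)^2)"
proof -
  define \<rho> where "\<rho> = hess_sphere_bound H"
  define y where "y = (1 - e) *\<^sub>R x"
  define d where "d = - (\<eta> *\<^sub>R G x)"
  define p where "p s = y + s *\<^sub>R d" for s :: real
  have e1: "0 < 1 - e" using e by simp
  have y0: "y \<noteq> 0" unfolding y_def using e1 x by simp
  have yd: "y \<bullet> d = 0" unfolding y_def d_def using inner_G_self[OF x] by (simp add: inner_commute)
  have p0: "p s \<noteq> 0" for s
    using norm_le_norm_add_orthogonal[of y "s *\<^sub>R d"] yd y0 unfolding p_def by auto
  have dp: "(p has_vector_derivative d) (at s)" for s
    unfolding p_def[abs_def] by (auto intro!: derivative_eq_intros)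
  have "- L (p 0) + 1 * - (G (p 0) \<bullet> d) - \<rho> * (norm d)^2 / (norm y)^2 * 1^2 / 2 \<le> - L (p 1)"
  proof (rule taylor_lower_bound[where \<phi>' = "\<lambda>s. - (G (p s) \<bullet> d)"
        and \<phi>'' = "\<lambda>s. - (G (p s) \<bullet> 0 + H (p s) d \<bullet> d)"])
    fix s :: real
    show "((\<lambda>s. - L (p s)) has_real_derivative - (G (p s) \<bullet> d)) (at s)"
      using has_real_derivative_L_comp[OF dp p0] by (rule DERIV_minus)
    show "((\<lambda>s. - (G (p s) \<bullet> d)) has_real_derivative - (G (p s) \<bullet> 0 + H (p s) d \<bullet> d)) (at s)"
      using has_real_derivative_inner_G_comp[OF dp has_vector_derivative_const p0] by (rule DERIV_minus)
    show "- (\<rho> * (norm d)^2 / (norm y)^2) \<le> - (G (p s) \<bullet> 0 + H (p s) d \<bullet> d)"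
      using abs_inner_H_le_orthogonal[OF y0 yd, of s] unfolding p_def \<rho>_def by simp
  qed simp
  moreover have "p 1 = (1 - e) *\<^sub>R x - \<eta> *\<^sub>R G x" "p 0 = y" unfolding p_def y_def d_def by simp_all
  moreover have "L y = L x" unfolding y_def using scale_inv[OF e1 x] .
  moreover have "G y \<bullet> d = - \<eta> * (norm (G x))^2 / (1 - e)"
    unfolding y_def d_def using G_scaleR[OF e1 x] by (simp add: power2_norm_eq_inner)
  moreover have "\<rho> * (norm d)^2 / (norm y)^2 = \<rho> * \<eta>^2 * (norm (G x))^2 / ((1 - e)^2 * (norm x)^2)"
    unfolding y_def d_def by (simp add: power_mult_distrib)
  ultimately show ?thesis unfolding \<rho>_def by simp
qed

lemma L_wd_step_le:
  assumes "x \<noteq> 0" "0 < e" "e \<le> 1/2" "0 < \<eta>" "4 * hess_sphere_bound H * \<eta> \<le> (norm x)^2"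
  shows "L ((1 - e) *\<^sub>R x - \<eta> *\<^sub>R G x) \<le> L x - 3/4 * (\<eta> * (norm (G x))^2)"
  using L_wd_step_taylor[of x e \<eta>] wd_descent_arith[of e \<eta> "hess_sphere_bound H" "(norm x)^2" "(norm (G x))^2"]
    assms rho_pos
  by simp

lemma wd_iterate_nonzero:
  assumes "x 0 \<noteq> 0" "e < 1" and x_Suc: "\<And>t. x (Suc t) = (1 - e) *\<^sub>R x t - \<eta> *\<^sub>R G (x t)"
  shows "x t \<noteq> 0"
proof (induction t)
  case (Suc t)
  have "0 < (1 - e)^2 * (norm (x t))^2" using Suc assms(2) by simp
  then have "0 < (norm (x (Suc t)))^2" unfolding x_Suc norm_wd_step[OF Suc]
    by (smt (verit) zero_le_mult_iff zero_le_power2)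
  then show ?case by auto
qed (use assms(1) in simp)

lemma wd_iterates_norm_recursion:
  fixes x :: "nat \<Rightarrow> 'a"
  assumes "0 < \<eta>" "0 < lam" "\<eta> * lam \<le> 1/2" "x 0 \<noteq> 0"
    and x_Suc: "\<And>t. x (Suc t) = (1 - \<eta> * lam) *\<^sub>R x t - \<eta> *\<^sub>R G (x t)"
  shows "wd_norm_recursion (\<lambda>t. (norm (x t))^2 / (hess_sphere_bound H * \<eta>))
           (\<lambda>t. (norm (G ((1 / norm (x t)) *\<^sub>R x t)))^2 / (hess_sphere_bound H)^2)
           (\<lambda>t. L (x t) / hess_sphere_bound H) (\<eta> * lam)"
proof -
  define \<rho> where "\<rho> = hess_sphere_bound H"
  define e where "e = \<eta> * lam"
  define a where "a t = (norm (x t))^2 / (\<rho> * \<eta>)" for t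
  define s where "s t = (norm (G ((1 / norm (x t)) *\<^sub>R x t)))^2 / \<rho>^2" for t
  define f where "f t = L (x t) / \<rho>" for t
  have \<rho>: "0 < \<rho>" unfolding \<rho>_def by (rule rho_pos)
  have e: "0 < e" "e \<le> 1/2" unfolding e_def using assms(1-3) by simp_all
  have x0: "x t \<noteq> 0" for t
    using e(2) unfolding e_def by (intro wd_iterate_nonzero[OF assms(4) _ x_Suc]) simp
  have a_pos: "0 < a t" for t unfolding a_def using x0[of t] \<rho> assms(1) by simp
  have s_div_a: "s t / a t = \<eta> * (norm (G (x t)))^2 / \<rho>" for t
    unfolding s_def a_def norm_G_eq_norm_G_normalized[OF x0[of t]] using x0[of t] \<rho> assms(1)
    by (simp add: field_simps power2_eq_square)
  have a_Suc: "a (Suc t) = (1 - e)^2 * a t + s t / a t" for t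
  proof -
    have "(norm (x (Suc t)))^2 = (1 - e)^2 * (norm (x t))^2 + \<eta>^2 * (norm (G (x t)))^2"
      unfolding x_Suc e_def by (rule norm_wd_step[OF x0])
    then show ?thesis unfolding s_div_a unfolding a_def using \<rho> assms(1) by (simp add: field_simps power2_eq_square)
  qed
  have s_le: "s t \<le> pi^2" for t
  proof -
    have "norm (G ((1 / norm (x t)) *\<^sub>R x t)) \<le> pi * \<rho>"
      unfolding \<rho>_def using x0[of t] by (intro norm_G_le_on_sphere) simp
    then have "(norm (G ((1 / norm (x t)) *\<^sub>R x t)))^2 \<le> (pi * \<rho>)^2" by (rule power_mono) simp
    then show ?thesis unfolding s_def using \<rho> by (simp add: divide_le_eq power_mult_distrib)
  qed
  have f_descent: "f (Suc t) \<le> f t - 3/4 * (s t / a t)" if "4 \<le> a t" for t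
  proof -
    have "4 * \<rho> * \<eta> \<le> (norm (x t))^2" using that \<rho> assms(1) unfolding a_def by (simp add: field_simps)
    then have "L (x (Suc t)) \<le> L (x t) - 3/4 * (\<eta> * (norm (G (x t)))^2)"
      unfolding x_Suc \<rho>_def using x0[of t] e assms(1) unfolding e_def by (intro L_wd_step_le) auto
    then show ?thesis unfolding s_div_a f_def using \<rho> by (simp add: field_simps)
  qed
  have f_oscillation: "f i - f j \<le> 4 * pi" for i j
    using L_diff_le[OF x0 x0, of i j] \<rho> unfolding f_def \<rho>_def
    by (simp add: field_simps diff_divide_distrib[symmetric])
  have "wd_norm_recursion a s f e"
    using e a_pos a_Suc s_le f_descent f_oscillation by unfold_locales (auto simp: s_def)
  then show ?thesis unfolding a_def[abs_def] s_def[abs_def] f_def[abs_def] \<rho>_def e_def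
    by (simp add: mult.commute)
qed

end

theorem mainTheorem1:
  fixes L :: "'a::euclidean_space \<Rightarrow> real"
    and G :: "'a \<Rightarrow> 'a"
    and H :: "'a \<Rightarrow> 'a \<Rightarrow>\<^sub>L 'a"
    and x :: "nat \<Rightarrow> 'a"
    and eta lam :: real
  assumes L_grad: "\<And>y. y \<noteq> 0 \<Longrightarrow> (L has_derivative (\<lambda>h. G y \<bullet> h)) (at y)"
    and G_hess: "\<And>y. y \<noteq> 0 \<Longrightarrow> (G has_derivative blinfun_apply (H y)) (at y)"
    and H_cont: "continuous_on (- {0}) H"
    and scale_inv: "\<And>c y. c > 0 \<Longrightarrow> y \<noteq> 0 \<Longrightarrow> L (c *\<^sub>R y) = L y"
    and rho_pos: "hess_sphere_bound H > 0"
    and eta_pos: "eta > 0" and lambda_pos: "lam > 0"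
    and eta_lambda: "eta * lam \<le> 1 / 2"
    and x0: "x 0 \<noteq> 0"
    and x_step: "\<And>t. x (Suc t) = (1 - eta * lam) *\<^sub>R x t - eta *\<^sub>R G (x t)"
  shows "Min ((\<lambda>t. (norm (G ((1 / norm (x t)) *\<^sub>R x t)))\<^sup>2) `
            {0 .. nat \<lceil>(1 / (2 * eta * lam)) *
               (\<bar>ln ((norm (x 0))\<^sup>2 / (hess_sphere_bound H * pi\<^sup>2 * eta))\<bar> + 3)\<rceil>})
         \<le> 8 * pi ^ 4 * (hess_sphere_bound H)\<^sup>2 * lam * eta"
proof -
  interpret scale_invariant_loss L G H
    using L_grad G_hess H_cont scale_inv rho_pos by (rule scale_invariant_loss.intro)
  interpret wd_norm_recursion "\<lambda>t. (norm (x t))^2 / (hess_sphere_bound H * eta)"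
      "\<lambda>t. (norm (G ((1 / norm (x t)) *\<^sub>R x t)))^2 / (hess_sphere_bound H)^2"
      "\<lambda>t. L (x t) / hess_sphere_bound H" "eta * lam"
    using eta_pos lambda_pos eta_lambda x0 x_step by (rule wd_iterates_norm_recursion)
  define l where "l = \<bar>ln ((norm (x 0))\<^sup>2 / (hess_sphere_bound H * pi\<^sup>2 * eta))\<bar>"
  define T where "T = nat \<lceil>(1 / (2 * eta * lam)) * (l + 3)\<rceil>"
  have "(\<bar>ln ((norm (x 0))^2 / (hess_sphere_bound H * eta) / pi^2)\<bar> + 3) / (2 * (eta * lam)) = (1 / (2 * eta * lam)) * (l + 3)"
    unfolding l_def by (simp add: field_simps)
  also have "\<dots> \<le> real T"
    unfolding T_def using eta_pos lambda_pos by (intro nat_ceiling_bounds(1)) (simp add: l_def)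
  finally obtain t where t: "t \<le> T"
    and "(norm (G ((1 / norm (x t)) *\<^sub>R x t)))^2 / (hess_sphere_bound H)^2 \<le> 8 * pi^4 * (eta * lam)"
    using exists_s_le by blast
  then have "(norm (G ((1 / norm (x t)) *\<^sub>R x t)))^2 \<le> 8 * pi ^ 4 * (hess_sphere_bound H)^2 * lam * eta"
    using rho_pos by (simp add: divide_le_eq mult_ac)
  moreover have "Min ((\<lambda>t. (norm (G ((1 / norm (x t)) *\<^sub>R x t)))\<^sup>2) ` {0 .. T})
      \<le> (norm (G ((1 / norm (x t)) *\<^sub>R x t)))^2"
    using t by (intro Min_le) auto
  ultimately show ?thesis unfolding T_def l_def by linarith
qed

end
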